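(* Let $H$ be a real Hilbert space, $C\subseteq H$ nonempty, closed and convex, and $F:H\to H$ an operator such that (A1) $S_D\neq\emptyset$; (A2) $F$ is quasimonotone; (A3) $F$ is uniformly continuous on $H$. Let $\{z_n\},\{w_n\},\{\lambda_n\}$ be the sequences generated by Algorithm 3.1 (with $\epsilon=0$), assume $z_n\neq w_n$ for all $n$, and assume $\lambda_n\to0$ as $n\to\infty$. Let $I:=\{n\in\mathbb{N}:\lambda_{n+1}<\lambda_n\}$ and let $\{n_k\}_{k\ge1}$ be an enumeration of all indices in $I$. Then (i) $\lim_{k\to\infty}\frac{\|z_{n_k}-w_{n_k}\|}{\lambda_{n_k}}=0$; (ii) $\lim_{k\to\infty}\frac{\|z_{n_k+1}-z_{n_k}\|}{\lambda_{n_k}}=0$.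
   Context: $P_C$ denotes the metric projection onto $C$. $S_D$ is the set of $z\in C$ with $\langle F(v),v-z\rangle\ge0$ for all $v\in C$. $F$ is quasimonotone if $\langle F(w),z-w\rangle>0$ implies $\langle F(z),z-w\rangle\ge0$ for all $w,z\in H$. Algorithm 3.1 (with $\epsilon=0$): fix $\mu\in(0,1)$, a sequence $\{\xi_n\}\subset[0,\infty)$ with $\sum_{n}\xi_n<\infty$, $z_1\in H$ and $\lambda_1>0$. For $n=1,2,\dots$: $w_n=P_C(z_n-\lambda_nF(z_n))$; $z_{n+1}=w_n+\lambda_n(F(z_n)-F(w_n))$; $\lambda_{n+1}=\min\{\frac{\mu\|z_n-w_n\|}{\|F(z_n)-F(w_n)\|},\lambda_n+\xi_n\}$ if $F(z_n)\neq F(w_n)$, and $\lambda_{n+1}=\lambda_n+\xi_n$ otherwise. *)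

theory Defs
  imports "HOL-Analysis.Analysis"
begin

text \<open>Metric projection onto C: the (unique, for C nonempty closed convex in a
Hilbert space) point of C nearest to x.\<close>
definition metric_proj :: "'a::real_inner set \<Rightarrow> 'a \<Rightarrow> 'a" where
  "metric_proj C x = (THE y. y \<in> C \<and> (\<forall>z\<in>C. norm (x - y) \<le> norm (x - z)))"

definition SD :: "'a::real_inner set \<Rightarrow> ('a \<Rightarrow> 'a) \<Rightarrow> 'a set" where
  "SD C F = {z \<in> C. \<forall>v\<in>C. inner (F v) (v - z) \<ge> 0}"

definition quasimonotone :: "('a::real_inner \<Rightarrow> 'a) \<Rightarrow> bool" where
  "quasimonotone F \<longleftrightarrow>
     (\<forall>w z. inner (F w) (z - w) > 0 \<longrightarrow> inner (F z) (z - w) \<ge> 0)"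

end

theory Submission imports Defs begin

text \<open>At the indices where the step size decreases, the rule gives
  \<open>\<lambda>\<^sub>n\<^sub>+\<^sub>1 \<parallel>F z\<^sub>n - F w\<^sub>n\<parallel> = \<mu> \<parallel>z\<^sub>n - w\<^sub>n\<parallel>\<close>.
  A uniformly continuous map on the whole space grows at most affinely,
  \<open>\<parallel>F x - F y\<parallel> \<le> \<parallel>x - y\<parallel>/\<delta> + 1\<close>, so as \<open>\<lambda>\<^sub>n\<^sub>+\<^sub>1 \<rightarrow> 0\<close> the balance forces
  \<open>\<parallel>z\<^sub>n - w\<^sub>n\<parallel> \<le> 2\<lambda>\<^sub>n\<^sub>+\<^sub>1/\<mu> \<rightarrow> 0\<close>, hence \<open>\<parallel>F z\<^sub>n - F w\<^sub>n\<parallel> \<rightarrow> 0\<close> by uniform continuity.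
  Then \<open>\<parallel>z\<^sub>n - w\<^sub>n\<parallel>/\<lambda>\<^sub>n \<le> \<parallel>z\<^sub>n - w\<^sub>n\<parallel>/\<lambda>\<^sub>n\<^sub>+\<^sub>1 = \<parallel>F z\<^sub>n - F w\<^sub>n\<parallel>/\<mu> \<rightarrow> 0\<close>, and
  \<open>\<parallel>z\<^sub>n\<^sub>+\<^sub>1 - z\<^sub>n\<parallel>/\<lambda>\<^sub>n \<le> \<parallel>z\<^sub>n - w\<^sub>n\<parallel>/\<lambda>\<^sub>n + \<parallel>F z\<^sub>n - F w\<^sub>n\<parallel> \<rightarrow> 0\<close>.\<close>

lemma norm_diff_le_of_small_increments:
  fixes F :: "'a::real_normed_vector \<Rightarrow> 'b::real_normed_vector"
  assumes step: "\<And>x y. norm (x - y) < d \<Longrightarrow> norm (F x - F y) < 1"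
    and "norm (x - y) < real m * d"
  shows "norm (F x - F y) \<le> real m"
  using assms(2)
proof (induction m arbitrary: x)
  case 0
  then show ?case by simp
next
  case (Suc m)
  define x' where "x' = x - (1 / real (Suc m)) *\<^sub>R (x - y)"
  have "x' - y = (real m / real (Suc m)) *\<^sub>R (x - y)"
  proof -
    have "x' - y = (x - y) - (1 / real (Suc m)) *\<^sub>R (x - y)"
      by (simp add: x'_def)
    also have "\<dots> = (1 - 1 / real (Suc m)) *\<^sub>R (x - y)"
      by (simp add: scaleR_left_diff_distrib)
    finally show ?thesis
      by (simp add: field_simps)
  qed
  then have "norm (x' - y) = real m / real (Suc m) * norm (x - y)"
    by simp
  have far: "norm (F x' - F y) \<le> real m"
  proof (cases "m = 0")
    case True
    then show ?thesis
      by (simp add: x'_def)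
  next
    case False
    have "real m / real (Suc m) * norm (x - y) < real m / real (Suc m) * (real (Suc m) * d)"
      using Suc.prems False by (intro mult_strict_left_mono) auto
    then show ?thesis
      using Suc.IH[of x'] \<open>norm (x' - y) = _\<close> by simp
  qed
  have "norm (x - x') = norm (x - y) / real (Suc m)"
    by (simp add: x'_def)
  also have "\<dots> < d"
    using Suc.prems by (simp add: divide_less_eq mult.commute)
  finally have near: "norm (F x - F x') < 1"
    by (rule step)
  have "norm (F x - F y) \<le> norm (F x - F x') + norm (F x' - F y)"
    using norm_triangle_ineq[of "F x - F x'" "F x' - F y"] by simp
  then show ?case
    using far near by simp
qed

lemma uniformly_continuous_on_UNIV_affine_bound:
  fixes F :: "'a::real_normed_vector \<Rightarrow> 'b::real_normed_vector"
  assumes "uniformly_continuous_on UNIV F"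
  obtains d where "d > 0" "\<And>x y. norm (F x - F y) \<le> norm (x - y) / d + 1"
proof -
  obtain d where d: "d > 0" and step: "\<And>x y. norm (x - y) < d \<Longrightarrow> norm (F x - F y) < 1"
    using assms unfolding uniformly_continuous_on_def dist_norm
    by (metis UNIV_I zero_less_one)
  show thesis
  proof (rule that[OF d])
    fix x y :: 'a
    define m where "m = nat \<lfloor>norm (x - y) / d\<rfloor> + 1"
    have "norm (x - y) / d < real m" and m_le: "real m \<le> norm (x - y) / d + 1"
      using d by (simp_all add: m_def) linarith
    then have "norm (x - y) < real m * d"
      using d by (simp add: divide_less_eq)
    with step have "norm (F x - F y) \<le> real m"
      by (rule norm_diff_le_of_small_increments)
    with m_le show "norm (F x - F y) \<le> norm (x - y) / d + 1"
      by linarith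
  qed
qed

lemma filterlim_at_top_if_inj_on_atLeast:
  fixes nk :: "nat \<Rightarrow> nat"
  assumes "inj_on nk {m..}"
  shows "filterlim nk at_top sequentially"
  unfolding filterlim_at_top
proof
  fix N
  have "{k. \<not> N \<le> nk k} \<subseteq> (nk -` {..<N} \<inter> {m..}) \<union> {..<m}"
    by auto
  moreover have "finite (nk -` {..<N} \<inter> {m..})"
    using assms by (intro finite_vimage_IntI) auto
  ultimately show "\<forall>\<^sub>F k in sequentially. N \<le> nk k"
    unfolding cofinite_eq_sequentially[symmetric] eventually_cofinite
    by (meson finite_Un finite_lessThan finite_subset)
qed

lemma tendsto_zero_norm_diff_if_balanced:
  fixes F :: "'a::real_normed_vector \<Rightarrow> 'b::real_normed_vector"
  assumes F: "uniformly_continuous_on UNIV F" and mu: "mu > 0" and s: "s \<longlonglongrightarrow> 0"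
    and balance: "\<forall>\<^sub>F k in sequentially.
      s k > 0 \<and> s k * norm (F (x k) - F (y k)) = mu * norm (x k - y k)"
  shows "(\<lambda>k. norm (x k - y k)) \<longlonglongrightarrow> 0"
proof -
  obtain d where d: "d > 0" and growth: "\<And>x y. norm (F x - F y) \<le> norm (x - y) / d + 1"
    using uniformly_continuous_on_UNIV_affine_bound[OF F] by blast
  have "\<forall>\<^sub>F k in sequentially. s k < mu * d / 2"
    using s mu d by (intro order_tendstoD) auto
  with balance have "\<forall>\<^sub>F k in sequentially. norm (norm (x k - y k)) \<le> 2 / mu * s k"
  proof eventually_elim
    case (elim k)
    define a where "a = norm (x k - y k)"
    have "mu * a = s k * norm (F (x k) - F (y k))"
      using elim by (simp add: a_def)
    also have "\<dots> \<le> s k * (a / d + 1)"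
      using elim growth by (intro mult_left_mono) (simp_all add: a_def)
    also have "\<dots> = s k / d * a + s k"
      by (simp add: field_simps)
    also have "\<dots> \<le> mu / 2 * a + s k"
      using elim d by (intro add_right_mono mult_right_mono) (simp_all add: a_def field_simps)
    finally show ?case
      using mu by (simp add: a_def field_simps)
  qed
  moreover have "(\<lambda>k. 2 / mu * s k) \<longlonglongrightarrow> 0"
    using tendsto_mult_right_zero[OF s] .
  ultimately show ?thesis
    by (rule Lim_null_comparison)
qed

locale adaptive_stepsize =
  fixes F :: "'a::real_normed_vector \<Rightarrow> 'a"
    and mu :: real and xi :: "nat \<Rightarrow> real"
    and z w :: "nat \<Rightarrow> 'a" and lam :: "nat \<Rightarrow> real"
  assumes mu_pos: "0 < mu"
    and xi_nonneg: "\<And>n. xi n \<ge> 0"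
    and lam_1_pos: "lam 1 > 0"
    and z_Suc: "\<And>n. n \<ge> 1 \<Longrightarrow> z (Suc n) = w n + lam n *\<^sub>R (F (z n) - F (w n))"
    and lam_Suc: "\<And>n. n \<ge> 1 \<Longrightarrow> lam (Suc n) =
        (if F (z n) \<noteq> F (w n)
         then min (mu * norm (z n - w n) / norm (F (z n) - F (w n))) (lam n + xi n)
         else lam n + xi n)"
    and z_ne_w: "\<And>n. n \<ge> 1 \<Longrightarrow> z n \<noteq> w n"
begin

lemma lam_pos: "n \<ge> 1 \<Longrightarrow> lam n > 0"
proof (induction n rule: dec_induct)
  case base
  then show ?case
    using lam_1_pos by simp
next
  case (step n)
  have "mu * norm (z n - w n) / norm (F (z n) - F (w n)) > 0" if "F (z n) \<noteq> F (w n)"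
    using that mu_pos z_ne_w[OF step.hyps(1)] by simp
  moreover have "lam n + xi n > 0"
    using step.IH xi_nonneg[of n] by linarith
  ultimately show ?case
    using lam_Suc[OF step.hyps(1)] by simp
qed

lemma lam_Suc_balance:
  assumes "n \<ge> 1" and "lam (Suc n) < lam n"
  shows "lam (Suc n) * norm (F (z n) - F (w n)) = mu * norm (z n - w n)"
proof -
  have "lam (Suc n) < lam n + xi n"
    using assms(2) xi_nonneg[of n] by linarith
  then have "F (z n) \<noteq> F (w n) \<and> lam (Suc n) = mu * norm (z n - w n) / norm (F (z n) - F (w n))"
    using lam_Suc[OF assms(1)] by (auto simp: min_def split: if_splits)
  then show ?thesis
    by simp
qed

lemma norm_z_Suc_diff_le:
  assumes "n \<ge> 1"
  shows "norm (z (Suc n) - z n) \<le> norm (z n - w n) + lam n * norm (F (z n) - F (w n))"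
proof -
  have "z (Suc n) - z n = (w n - z n) + lam n *\<^sub>R (F (z n) - F (w n))"
    using z_Suc[OF assms] by (simp add: algebra_simps)
  then have "norm (z (Suc n) - z n) \<le> norm (w n - z n) + norm (lam n *\<^sub>R (F (z n) - F (w n)))"
    by (metis norm_triangle_ineq)
  then show ?thesis
    using lam_pos[OF assms] by (simp add: norm_minus_commute)
qed

lemma norm_F_diff_tendsto_zero_along_decreases:
  assumes F: "uniformly_continuous_on UNIV F" and lam: "lam \<longlonglongrightarrow> 0"
    and nk: "filterlim nk at_top sequentially"
    and decrease: "\<forall>\<^sub>F k in sequentially. nk k \<ge> 1 \<and> lam (Suc (nk k)) < lam (nk k)"
  shows "(\<lambda>k. norm (F (z (nk k)) - F (w (nk k)))) \<longlonglongrightarrow> 0"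
proof -
  have "(\<lambda>k. lam (Suc (nk k))) \<longlonglongrightarrow> 0"
    using filterlim_compose[OF LIMSEQ_Suc[OF lam] nk] .
  moreover have "\<forall>\<^sub>F k in sequentially. lam (Suc (nk k)) > 0 \<and>
      lam (Suc (nk k)) * norm (F (z (nk k)) - F (w (nk k))) = mu * norm (z (nk k) - w (nk k))"
    using decrease by eventually_elim (simp add: lam_pos lam_Suc_balance)
  ultimately have "(\<lambda>k. norm (z (nk k) - w (nk k))) \<longlonglongrightarrow> 0"
    by (rule tendsto_zero_norm_diff_if_balanced[OF F mu_pos])
  then show ?thesis
    using uniformly_continuous_on_sequentially[THEN iffD1, OF F, rule_format,
        of "\<lambda>k. z (nk k)" "\<lambda>k. w (nk k)"]
    by (simp add: dist_norm)
qed

lemma tendsto_zero_along_decreases: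
  assumes F: "uniformly_continuous_on UNIV F" and lam: "lam \<longlonglongrightarrow> 0"
    and nk: "filterlim nk at_top sequentially"
    and decrease: "\<forall>\<^sub>F k in sequentially. nk k \<ge> 1 \<and> lam (Suc (nk k)) < lam (nk k)"
  shows "(\<lambda>k. norm (z (nk k) - w (nk k)) / lam (nk k)) \<longlonglongrightarrow> 0"
    and "(\<lambda>k. norm (z (Suc (nk k)) - z (nk k)) / lam (nk k)) \<longlonglongrightarrow> 0"
proof -
  define a where "a k = norm (z (nk k) - w (nk k))" for k
  define D where "D k = norm (F (z (nk k)) - F (w (nk k)))" for k
  have D: "D \<longlonglongrightarrow> 0"
    using norm_F_diff_tendsto_zero_along_decreases[OF assms] by (simp add: D_def[abs_def])
  have "\<forall>\<^sub>F k in sequentially. norm (a k / lam (nk k)) \<le> D k / mu"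
    using decrease
  proof eventually_elim
    case (elim k)
    then have "norm (a k / lam (nk k)) = a k / lam (nk k)"
      using lam_pos[of "nk k"] by (simp add: a_def)
    also have "\<dots> \<le> a k / lam (Suc (nk k))"
      using elim lam_pos[of "Suc (nk k)"] by (intro divide_left_mono) (simp_all add: a_def)
    also have "\<dots> = D k / mu"
      using elim lam_pos[of "Suc (nk k)"] lam_Suc_balance[of "nk k"] mu_pos
      by (simp add: a_def D_def field_simps)
    finally show ?case .
  qed
  then show ratio: "(\<lambda>k. a k / lam (nk k)) \<longlonglongrightarrow> 0"
    using tendsto_divide_zero[OF D] by (rule Lim_null_comparison)
  have "\<forall>\<^sub>F k in sequentially.
      norm (norm (z (Suc (nk k)) - z (nk k)) / lam (nk k)) \<le> a k / lam (nk k) + D k"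
    using decrease
  proof eventually_elim
    case (elim k)
    then have "norm (z (Suc (nk k)) - z (nk k)) \<le> a k + lam (nk k) * D k"
      unfolding a_def D_def by (intro norm_z_Suc_diff_le) simp
    then show ?case
      using lam_pos[of "nk k"] elim by (simp add: field_simps)
  qed
  then show "(\<lambda>k. norm (z (Suc (nk k)) - z (nk k)) / lam (nk k)) \<longlonglongrightarrow> 0"
    using tendsto_add_zero[OF ratio D] by (rule Lim_null_comparison)
qed

end

theorem lemma4p3:
  fixes C :: "'a::{real_inner,complete_space} set"
    and F :: "'a \<Rightarrow> 'a"
    and mu :: real and xi :: "nat \<Rightarrow> real"
    and z w :: "nat \<Rightarrow> 'a" and lam :: "nat \<Rightarrow> real"
    and nk :: "nat \<Rightarrow> nat"
  assumes C: "C \<noteq> {}" "closed C" "convex C"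
    and A1: "SD C F \<noteq> {}"
    and A2: "quasimonotone F"
    and A3: "uniformly_continuous_on UNIV F"
    and mu: "0 < mu" "mu < 1"
    and xi: "\<And>n. xi n \<ge> 0" "summable xi"
    and lam1: "lam 1 > 0"
    and w_def: "\<And>n. n \<ge> 1 \<Longrightarrow> w n = metric_proj C (z n - lam n *\<^sub>R F (z n))"
    and z_def: "\<And>n. n \<ge> 1 \<Longrightarrow> z (Suc n) = w n + lam n *\<^sub>R (F (z n) - F (w n))"
    and lam_def: "\<And>n. n \<ge> 1 \<Longrightarrow> lam (Suc n) =
        (if F (z n) \<noteq> F (w n)
         then min (mu * norm (z n - w n) / norm (F (z n) - F (w n))) (lam n + xi n)
         else lam n + xi n)"
    and zw: "\<And>n. n \<ge> 1 \<Longrightarrow> z n \<noteq> w n"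
    and lam_lim: "lam \<longlonglongrightarrow> 0"
    and enum: "bij_betw nk {1..} {n. n \<ge> 1 \<and> lam (Suc n) < lam n}"
  shows "(\<lambda>k. norm (z (nk k) - w (nk k)) / lam (nk k)) \<longlonglongrightarrow> 0 \<and>
         (\<lambda>k. norm (z (Suc (nk k)) - z (nk k)) / lam (nk k)) \<longlonglongrightarrow> 0"
proof -
  interpret adaptive_stepsize F mu xi z w lam
    using mu xi(1) lam1 z_def lam_def zw by unfold_locales auto
  have decrease: "\<forall>\<^sub>F k in sequentially. nk k \<ge> 1 \<and> lam (Suc (nk k)) < lam (nk k)"
    using enum unfolding eventually_sequentially bij_betw_def by (intro exI[of _ 1]) auto
  have nk: "filterlim nk at_top sequentially"
    using enum by (intro filterlim_at_top_if_inj_on_atLeast[of _ 1]) (simp add: bij_betw_def)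
  show ?thesis
    using tendsto_zero_along_decreases[OF A3 lam_lim nk decrease] by (rule conjI)
qed

end
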